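(* Let $\nu>0$. For every $x>0$, $$\lim_{t\to\infty} t^{\nu}\,E^{(\nu)}_x\Big[\Big(\frac{1}{R_t}\Big)^{2\nu}\Big]=\frac{1}{2^{\nu}\Gamma(\nu+1)}.$$
   Context: For $\mu\in\mathbb{R}$ and $x>0$, $P^{(\mu)}_x$ denotes the law on $\Omega=C([0,\infty);\mathbb{R})$ of the Bessel process with index $\mu$ (dimension $2(\mu+1)$) started at $x$, and $E^{(\mu)}_x$ the corresponding expectation; $R$ is the coordinate process on $\Omega$. $\Gamma$ is the gamma function. *)

theory Defs
  imports "HOL-Probability.Probability"
begin

definition bessel_I :: "real \<Rightarrow> real \<Rightarrow> real" where
  "bessel_I \<nu> z = (\<Sum>k. (z / 2) powr (2 * real k + \<nu>) / (fact k * Gamma (real k + \<nu> + 1)))"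

text \<open>Transition density of the Bessel process with index nu (dimension 2(nu+1)),
  started at x > 0, at time t > 0, evaluated at y > 0 (Revuz--Yor, Ch. XI):
  p_t(x,y) = (y/t) (y/x)^nu exp(-(x^2+y^2)/(2t)) I_nu(x y / t).\<close>
definition bessel_density :: "real \<Rightarrow> real \<Rightarrow> real \<Rightarrow> real \<Rightarrow> real" where
  "bessel_density \<nu> t x y =
     (y / t) * (y / x) powr \<nu> * exp (- (x\<^sup>2 + y\<^sup>2) / (2 * t)) * bessel_I \<nu> (x * y / t)"

text \<open>Law of R_t under P^(nu)_x (one-dimensional marginal), a measure on the reals
  concentrated on (0, infinity).\<close>
definition bessel_marginal :: "real \<Rightarrow> real \<Rightarrow> real \<Rightarrow> real measure" where
  "bessel_marginal \<nu> x t =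
     density lborel (\<lambda>y. indicator {0<..} y * ennreal (bessel_density \<nu> t x y))"

end

theory Submission
  imports Defs "HOL-Real_Asymp.Real_Asymp"
begin

text \<open>Expanding \<open>I_\<nu>\<close> in its power series, the weight \<open>y^(-2\<nu>)\<close> cancels the \<open>y^\<nu>\<close> factors of
  the transition density, so every term becomes an odd Gaussian moment
  \<open>y^(2k+1) exp (-y\<^sup>2/(2t))\<close>, which integrates in closed form. Monotone convergence then gives
  \<open>E_x[R_t^(-2\<nu>)] = (2t)^(-\<nu>) exp (-x\<^sup>2/(2t)) \<Sum>\<^sub>k (x\<^sup>2/(2t))^k / \<Gamma>(k+\<nu>+1)\<close>.
  As \<open>t \<rightarrow> \<infinity>\<close> the argument \<open>x\<^sup>2/(2t)\<close> tends to \<open>0\<close>, and the series tends to its constant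
  term \<open>1/\<Gamma>(\<nu>+1)\<close>.\<close>

lemma Gamma_add_nat_ge_fact:
  fixes a :: real
  assumes "a \<ge> 0"
  shows "fact k * Gamma (a + 1) \<le> Gamma (real k + a + 1)"
proof (induction k)
  case (Suc k)
  have "real k + a + 1 \<notin> \<int>\<^sub>\<le>\<^sub>0"
    using assms by (auto dest: nonpos_Ints_nonpos)
  from Gamma_plus1[OF this]
  have Gamma_Suc: "Gamma (real (Suc k) + a + 1) = (real k + a + 1) * Gamma (real k + a + 1)"
    by (simp add: add_ac)
  have "fact (Suc k) * Gamma (a + 1) = (real k + 1) * (fact k * Gamma (a + 1))"
    by simp
  also have "\<dots> \<le> (real k + a + 1) * Gamma (real k + a + 1)"
    using Suc assms by (intro mult_mono) auto
  finally show ?case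
    unfolding Gamma_Suc .
qed simp

definition mittag_leffler :: "real \<Rightarrow> real \<Rightarrow> real" where
  "mittag_leffler \<beta> s = (\<Sum>n. s ^ n / Gamma (real n + \<beta>))"

lemma summable_mittag_leffler:
  assumes "\<beta> \<ge> 1"
  shows "summable (\<lambda>n. s ^ n / Gamma (real n + \<beta>))"
proof (rule summable_comparison_test)
  show "summable (\<lambda>n. \<bar>s\<bar> ^ n / fact n / Gamma \<beta>)"
    using summable_exp[of "\<bar>s\<bar>"] by (intro summable_divide) (simp add: divide_inverse mult.commute)
  have "norm (s ^ n / Gamma (real n + \<beta>)) \<le> \<bar>s\<bar> ^ n / fact n / Gamma \<beta>" for n
  proof -
    have "fact n * Gamma \<beta> \<le> Gamma (real n + \<beta>)"
      using Gamma_add_nat_ge_fact[of "\<beta> - 1" n] assms by (simp add: add_ac)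
    moreover have "Gamma \<beta> > 0" using assms by simp
    ultimately show ?thesis
      by (simp add: abs_mult power_abs divide_simps mult_left_mono mult.commute)
  qed
  then show "\<exists>N. \<forall>n\<ge>N. norm (s ^ n / Gamma (real n + \<beta>)) \<le> \<bar>s\<bar> ^ n / fact n / Gamma \<beta>"
    by blast
qed

lemma mittag_leffler_0: "mittag_leffler \<beta> 0 = 1 / Gamma \<beta>"
  unfolding mittag_leffler_def by (subst suminf_finite[of "{0}"]) auto

lemma isCont_mittag_leffler_0:
  assumes "\<beta> \<ge> 1"
  shows "isCont (mittag_leffler \<beta>) 0"
proof -
  have "(mittag_leffler \<beta> \<longlongrightarrow> 1 / Gamma \<beta>) (at 0)"
    using powser_limit_0[of 1 "\<lambda>n. 1 / Gamma (real n + \<beta>)" "mittag_leffler \<beta>"]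
      summable_mittag_leffler[OF assms] by (simp add: mittag_leffler_def summable_sums)
  then show ?thesis
    by (simp add: isCont_def mittag_leffler_0)
qed

lemma gaussian_moment_odd_pos_scaled:
  fixes c :: real
  assumes "c > 0"
  shows "has_bochner_integral lborel
    (\<lambda>y. indicator {0..} y * (y ^ (2 * k + 1) * exp (- y\<^sup>2 / c))) (c ^ (k + 1) * fact k / 2)"
    (is "has_bochner_integral lborel ?f ?I")
proof -
  have sc: "sqrt c > 0" "sqrt c ^ 2 = c" using assms by auto
  have rescaled: "(\<lambda>u. ?f (0 + sqrt c * u))
      = (\<lambda>u. (c ^ k * sqrt c) * (indicator {0..} u *\<^sub>R (exp (- u\<^sup>2) * u ^ (2 * k + 1))))"
    using sc by (auto simp: fun_eq_iff indicator_def zero_le_mult_iff power_mult_distrib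
        power_add power_mult)
  have rescaled_value: "?I /\<^sub>R \<bar>sqrt c\<bar> = (c ^ k * sqrt c) * (fact k / 2)"
    using sc by (simp add: field_simps power_add)
  have "has_bochner_integral lborel (\<lambda>u. ?f (0 + sqrt c * u)) (?I /\<^sub>R \<bar>sqrt c\<bar>)"
    unfolding rescaled rescaled_value
    by (rule has_bochner_integral_mult_right[OF gaussian_moment_odd_pos])
  then show ?thesis
    using lborel_has_bochner_integral_real_affine_iff[of "sqrt c" ?f ?I 0] sc by simp
qed

lemma summable_bessel_I_coeffs:
  fixes \<nu> s :: real
  assumes "\<nu> \<ge> 0" "s \<ge> 0"
  shows "summable (\<lambda>k. s ^ k / (fact k * Gamma (real k + \<nu> + 1)))"
proof (rule summable_comparison_test)
  show "summable (\<lambda>k. s ^ k / Gamma (real k + (\<nu> + 1)))"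
    using assms by (intro summable_mittag_leffler) simp
  have "s ^ k / (fact k * Gamma (real k + \<nu> + 1)) \<le> s ^ k / Gamma (real k + (\<nu> + 1))" for k
    using assms by (intro divide_left_mono) (auto simp: add_ac intro!: mult_pos_pos)
  then show "\<exists>N. \<forall>k\<ge>N. norm (s ^ k / (fact k * Gamma (real k + \<nu> + 1)))
      \<le> s ^ k / Gamma (real k + (\<nu> + 1))"
    using assms by auto
qed

lemma bessel_I_eq_powr_mult_suminf:
  fixes \<nu> z :: real
  assumes "\<nu> \<ge> 0" "z > 0"
  shows "bessel_I \<nu> z = (z / 2) powr \<nu> * (\<Sum>k. ((z / 2)\<^sup>2) ^ k / (fact k * Gamma (real k + \<nu> + 1)))"
proof -
  have "(z / 2) powr (2 * real k + \<nu>) = (z / 2) powr \<nu> * ((z / 2)\<^sup>2) ^ k" for k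
    using assms by (simp add: powr_add powr_realpow mult.commute flip: powr_powr power_mult)
  then show ?thesis
    unfolding bessel_I_def
    using suminf_mult[OF summable_bessel_I_coeffs[OF assms(1), of "(z / 2)\<^sup>2"], of "(z / 2) powr \<nu>"]
    by (simp add: mult.assoc)
qed

lemma bessel_density_mult_inverse_power_sums:
  fixes \<nu> t x y :: real
  assumes "\<nu> \<ge> 0" "t > 0" "x > 0" "y > 0"
  shows "(\<lambda>k. (2 * t) powr (- \<nu>) * exp (- x\<^sup>2 / (2 * t)) / t
              * (x\<^sup>2 / (4 * t\<^sup>2)) ^ k / (fact k * Gamma (real k + \<nu> + 1))
              * (y ^ (2 * k + 1) * exp (- y\<^sup>2 / (2 * t))))
      sums (bessel_density \<nu> t x y * (1 / y) powr (2 * \<nu>))"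
proof -
  have powers: "(y / x) powr \<nu> * (x * y / t / 2) powr \<nu> * (1 / y) powr (2 * \<nu>) = (2 * t) powr (- \<nu>)"
  proof -
    have "(1 / y) powr (2 * \<nu>) = ((1 / y)\<^sup>2) powr \<nu>"
      using powr_powr[of "1 / y" 2 \<nu>] powr_realpow[of "1 / y" 2] assms by simp
    then have "(y / x) powr \<nu> * (x * y / t / 2) powr \<nu> * (1 / y) powr (2 * \<nu>)
        = ((y / x) * (x * y / t / 2) * (1 / y)\<^sup>2) powr \<nu>"
      using assms by (simp only: powr_mult[symmetric] divide_nonneg_nonneg mult_nonneg_nonneg
          zero_le_power2 less_imp_le)
    also have "(y / x) * (x * y / t / 2) * (1 / y)\<^sup>2 = inverse (2 * t)"
      using assms by (simp add: field_simps power2_eq_square)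
    finally show ?thesis
      by (simp only: powr_minus inverse_powr)
  qed
  define C where "C = (2 * t) powr (- \<nu>) * exp (- x\<^sup>2 / (2 * t)) / t * (y * exp (- y\<^sup>2 / (2 * t)))"
  define b where "b = (\<lambda>k. ((x * y / t / 2)\<^sup>2) ^ k / (fact k * Gamma (real k + \<nu> + 1)))"
  have "summable b"
    unfolding b_def using assms(1) by (rule summable_bessel_I_coeffs) simp
  have "bessel_density \<nu> t x y * (1 / y) powr (2 * \<nu>)
      = (y / t) * exp (- (x\<^sup>2 + y\<^sup>2) / (2 * t))
        * ((y / x) powr \<nu> * (x * y / t / 2) powr \<nu> * (1 / y) powr (2 * \<nu>)) * suminf b"
    using assms by (simp add: bessel_density_def bessel_I_eq_powr_mult_suminf b_def mult_ac)
  also have "\<dots> = C * suminf b"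
    unfolding powers C_def using assms
    by (simp add: field_simps exp_add[symmetric])
  finally have "(\<lambda>k. C * b k) sums (bessel_density \<nu> t x y * (1 / y) powr (2 * \<nu>))"
    using sums_mult[OF summable_sums[OF \<open>summable b\<close>], of C] by simp
  moreover have "C * b k = (2 * t) powr (- \<nu>) * exp (- x\<^sup>2 / (2 * t)) / t
              * (x\<^sup>2 / (4 * t\<^sup>2)) ^ k / (fact k * Gamma (real k + \<nu> + 1))
              * (y ^ (2 * k + 1) * exp (- y\<^sup>2 / (2 * t)))" for k
    unfolding C_def b_def using assms
    by (simp add: field_simps power_mult_distrib power_mult power2_eq_square)
  ultimately show ?thesis
    by (simp only:)
qed

lemma bessel_marginal_integrand_eq_suminf:
  fixes \<nu> t x y :: real
  assumes "\<nu> \<ge> 0" "t > 0" "x > 0"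
  shows "indicator {0<..} y * ennreal (bessel_density \<nu> t x y) * ennreal ((1 / y) powr (2 * \<nu>))
    = (\<Sum>k. ennreal ((2 * t) powr (- \<nu>) * exp (- x\<^sup>2 / (2 * t)) / t
              * (x\<^sup>2 / (4 * t\<^sup>2)) ^ k / (fact k * Gamma (real k + \<nu> + 1))
              * (indicator {0..} y * (y ^ (2 * k + 1) * exp (- y\<^sup>2 / (2 * t))))))"
    (is "_ = (\<Sum>k. ennreal (?u k))")
proof (cases "y > 0")
  case True
  have series: "?u sums (bessel_density \<nu> t x y * (1 / y) powr (2 * \<nu>))"
    using bessel_density_mult_inverse_power_sums[OF assms True] True by simp
  have "?u k \<ge> 0" for k
    using assms True by simp
  moreover have "indicator {0<..} y * ennreal (bessel_density \<nu> t x y) * ennreal ((1 / y) powr (2 * \<nu>))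
      = ennreal (suminf ?u)"
    using True series by (simp add: ennreal_mult'' sums_iff)
  ultimately show ?thesis
    using series by (simp add: suminf_ennreal2 sums_iff)
next
  case False
  then show ?thesis
    by (cases "y = 0") simp_all
qed

lemma nn_integral_bessel_marginal_inverse_power:
  fixes \<nu> x t :: real
  assumes "\<nu> \<ge> 0" "x > 0" "t > 0"
  shows "(\<integral>\<^sup>+y. ennreal ((1 / y) powr (2 * \<nu>)) \<partial>bessel_marginal \<nu> x t)
    = ennreal ((2 * t) powr (- \<nu>) * exp (- x\<^sup>2 / (2 * t)) * mittag_leffler (\<nu> + 1) (x\<^sup>2 / (2 * t)))"
proof -
  define a where "a = (\<lambda>k. (2 * t) powr (- \<nu>) * exp (- x\<^sup>2 / (2 * t)) / t
    * (x\<^sup>2 / (4 * t\<^sup>2)) ^ k / (fact k * Gamma (real k + \<nu> + 1)))"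
  define h where "h = (\<lambda>k y. indicator {0..} y * (y ^ (2 * k + 1) * exp (- y\<^sup>2 / (2 * t))))"
  define c where "c = (2 * t) powr (- \<nu>) * exp (- x\<^sup>2 / (2 * t))"
  define g where "g = (\<lambda>k. (x\<^sup>2 / (2 * t)) ^ k / Gamma (real k + (\<nu> + 1)))"
  have integrand_eq: "indicator {0<..} y * ennreal (bessel_density \<nu> t x y) * ennreal ((1 / y) powr (2 * \<nu>))
      = (\<Sum>k. ennreal (a k * h k y))" for y
    unfolding a_def h_def by (rule bessel_marginal_integrand_eq_suminf[OF assms(1,3,2)])
  have "(\<integral>\<^sup>+y. ennreal ((1 / y) powr (2 * \<nu>)) \<partial>bessel_marginal \<nu> x t)
      = (\<integral>\<^sup>+y. (\<Sum>k. ennreal (a k * h k y)) \<partial>lborel)"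
    unfolding bessel_marginal_def
    by (subst nn_integral_density) (simp_all add: integrand_eq[symmetric] bessel_density_def bessel_I_def)
  also have "\<dots> = (\<Sum>k. \<integral>\<^sup>+y. ennreal (a k * h k y) \<partial>lborel)"
    by (rule nn_integral_suminf) (simp add: h_def)
  also have "\<dots> = (\<Sum>k. ennreal (c * g k))"
  proof (rule suminf_cong)
    fix k
    have "has_bochner_integral lborel (\<lambda>y. a k * h k y) (a k * ((2 * t) ^ (k + 1) * fact k / 2))"
      unfolding h_def using assms(3)
      by (intro has_bochner_integral_mult_right gaussian_moment_odd_pos_scaled) simp
    moreover have "a k * h k y \<ge> 0" for y
      unfolding a_def h_def using assms by (simp split: split_indicator)
    moreover have "(4::real) ^ k = 2 ^ k * 2 ^ k"
      by (simp flip: power_mult_distrib)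
    then have "a k * ((2 * t) ^ (k + 1) * fact k / 2) = c * g k"
      unfolding a_def c_def g_def using assms
      by (simp add: field_simps power_mult_distrib power2_eq_square)
    ultimately show "(\<integral>\<^sup>+y. ennreal (a k * h k y) \<partial>lborel) = ennreal (c * g k)"
      using assms by (subst nn_integral_eq_integrable) (auto simp: has_bochner_integral_iff c_def g_def)
  qed
  also have "\<dots> = ennreal (c * suminf g)"
  proof -
    have "summable g"
      unfolding g_def using assms by (intro summable_mittag_leffler) simp
    moreover have "c * g k \<ge> 0" for k
      unfolding c_def g_def using assms by simp
    ultimately show ?thesis
      by (simp add: suminf_ennreal2 suminf_mult summable_mult)
  qed
  finally show ?thesis
    unfolding c_def g_def mittag_leffler_def .
qed

lemma integral_bessel_marginal_inverse_power:
  fixes \<nu> x t :: real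
  assumes "\<nu> \<ge> 0" "x > 0" "t > 0"
  shows "(\<integral>y. (1 / y) powr (2 * \<nu>) \<partial>bessel_marginal \<nu> x t)
    = (2 * t) powr (- \<nu>) * exp (- x\<^sup>2 / (2 * t)) * mittag_leffler (\<nu> + 1) (x\<^sup>2 / (2 * t))"
proof -
  have "mittag_leffler (\<nu> + 1) (x\<^sup>2 / (2 * t)) \<ge> 0"
    unfolding mittag_leffler_def using assms
    by (intro suminf_nonneg summable_mittag_leffler) auto
  then show ?thesis
    using nn_integral_bessel_marginal_inverse_power[OF assms]
    by (subst integral_eq_nn_integral) (auto simp: bessel_marginal_def)
qed

theorem lemma2p1:
  fixes \<nu> x :: real and M :: "'a measure" and R :: "real \<Rightarrow> 'a \<Rightarrow> real"
  assumes "\<nu> > 0" and "x > 0"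
    and "prob_space M"
    and "\<And>t. t \<ge> 0 \<Longrightarrow> R t \<in> borel_measurable M"
    and "\<And>\<omega>. \<omega> \<in> space M \<Longrightarrow> continuous_on {0..} (\<lambda>t. R t \<omega>) \<and> R 0 \<omega> = x"
    and "\<And>t. t > 0 \<Longrightarrow> distr M borel (R t) = bessel_marginal \<nu> x t"
  shows "((\<lambda>t. t powr \<nu> * prob_space.expectation M (\<lambda>\<omega>. (1 / R t \<omega>) powr (2 * \<nu>)))
           \<longlongrightarrow> 1 / (2 powr \<nu> * Gamma (\<nu> + 1))) at_top"
  \<comment> \<open>Only the one-dimensional marginals enter.\<close>
proof -
  define s where "s t = x\<^sup>2 / (2 * t)" for t :: real
  have closed_form: "t powr \<nu> * prob_space.expectation M (\<lambda>\<omega>. (1 / R t \<omega>) powr (2 * \<nu>))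
      = 2 powr (- \<nu>) * exp (- s t) * mittag_leffler (\<nu> + 1) (s t)" if "t > 0" for t
  proof -
    have [measurable]: "R t \<in> borel_measurable M"
      using assms(4) that by simp
    have "prob_space.expectation M (\<lambda>\<omega>. (1 / R t \<omega>) powr (2 * \<nu>))
        = (\<integral>y. (1 / y) powr (2 * \<nu>) \<partial>bessel_marginal \<nu> x t)"
      unfolding assms(6)[OF that, symmetric] by (rule integral_distr[symmetric]) simp_all
    also have "\<dots> = (2 * t) powr (- \<nu>) * exp (- s t) * mittag_leffler (\<nu> + 1) (s t)"
      unfolding s_def using assms(1,2) that by (simp add: integral_bessel_marginal_inverse_power)
    finally show ?thesis
      using that by (simp add: powr_mult powr_minus)
  qed
  have "\<forall>\<^sub>F t in at_top. t powr \<nu> * prob_space.expectation M (\<lambda>\<omega>. (1 / R t \<omega>) powr (2 * \<nu>))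
      = 2 powr (- \<nu>) * exp (- s t) * mittag_leffler (\<nu> + 1) (s t)"
    using eventually_gt_at_top[of 0] closed_form by (rule eventually_mono)
  moreover have "(s \<longlongrightarrow> 0) at_top"
    unfolding s_def by real_asymp
  then have "((\<lambda>t. 2 powr (- \<nu>) * exp (- s t) * mittag_leffler (\<nu> + 1) (s t))
      \<longlongrightarrow> 2 powr (- \<nu>) * exp (- 0) * mittag_leffler (\<nu> + 1) 0) at_top"
    using assms(1) by (intro tendsto_intros isCont_tendsto_compose[OF isCont_mittag_leffler_0]) auto
  ultimately show ?thesis
    by (simp add: tendsto_cong mittag_leffler_0 powr_minus divide_inverse inverse_mult_distrib)
qed

end
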